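(* Let $a\ge 3$ and $A=\begin{pmatrix}0&a&-2\\-a&0&a\\2&-a&0\end{pmatrix}$, with initial cluster $(x_1,x_2,x_3)$. For $k\ge1$ let $(3,1)_k$ denote the alternating mutation path of length $k$ whose first mutation is in direction $1$, i.e. $[1]$, $[3,1]$, $[1,3,1]$, $[3,1,3,1]$, and so on. Then for all $k\ge 1$, $\mathbf{d}(\operatorname{var}_A[(3,1)_k]) < \mathbf{d}(\operatorname{var}_A[(3,1)_{k+1}])$.
   Context: Matrix mutation: $\mu_k(B)=(b'_{ij})$ with $b'_{ij}=-b_{ij}$ if $i=k$ or $j=k$, $b'_{ij}=b_{ij}+\operatorname{sgn}(b_{ik})\max(b_{ik}b_{kj},0)$ otherwise. A seed $((x_1,x_2,x_3),B)$ mutates in direction $k$ to $(x',\mu_kB)$ with $x'_j=x_j$ ($j\ne k$), $x'_k=\big(\prod_{b_{ik}>0}x_i^{b_{ik}}+\prod_{b_{ik}<0}x_i^{-b_{ik}}\big)/x_k$. For a mutation path (mutations applied right to left), $\operatorname{var}_A[\cdot]$ is the cluster variable newly created by the last mutation, starting from the seed $((x_1,x_2,x_3),A)$. The denominator vector $\mathbf{d}(z)=(d_1,d_2,d_3)$ of a cluster variable $z$ is defined by writing $z=N(x_1,x_2,x_3)/(x_1^{d_1}x_2^{d_2}x_3^{d_3})$ with $N$ a polynomial not divisible by any $x_i$ (so $\mathbf{d}(x_i)=-e_i$). The order on denominator vectors is componentwise: $u<v$ means $u_i\le v_i$ for all $i$ and $u\ne v$. *)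

theory Defs
  imports Complex_Main
begin

(* Exchange matrices: indices 1,2,3 (entries outside are irrelevant). *)
type_synonym exmat = "nat \<Rightarrow> nat \<Rightarrow> int"

(* Cluster variables are represented as the rational functions they are, evaluated
   on the positive orthant: a point p gives the values p 1, p 2, p 3 of x1,x2,x3. *)
type_synonym ratfun = "(nat \<Rightarrow> real) \<Rightarrow> real"
type_synonym cluster = "nat \<Rightarrow> ratfun"
type_synonym seed = "cluster \<times> exmat"

definition mut_mat :: "nat \<Rightarrow> exmat \<Rightarrow> exmat" where
  "mut_mat k B = (\<lambda>i j. if i = k \<or> j = k then - B i j
                        else B i j + sgn (B i k) * max (B i k * B k j) 0)"

definition mut_clu :: "nat \<Rightarrow> exmat \<Rightarrow> cluster \<Rightarrow> cluster" where
  "mut_clu k B x = x(k := (\<lambda>p.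
      ((\<Prod>i\<in>{i\<in>{1,2,3}. B i k > 0}. x i p ^ nat (B i k))
     + (\<Prod>i\<in>{i\<in>{1,2,3}. B i k < 0}. x i p ^ nat (- B i k))) / x k p))"

definition mut_seed :: "nat \<Rightarrow> seed \<Rightarrow> seed" where
  "mut_seed k s = (mut_clu k (snd s) (fst s), mut_mat k (snd s))"

(* mutation path, applied right to left *)
definition path_seed :: "nat list \<Rightarrow> seed \<Rightarrow> seed" where
  "path_seed ks s = foldr mut_seed ks s"

definition init_clu :: cluster where
  "init_clu = (\<lambda>i p. p i)"

(* var_A[ks]: cluster variable created by the last (leftmost) mutation *)
definition var :: "exmat \<Rightarrow> nat list \<Rightarrow> ratfun" where
  "var A ks = fst (path_seed ks (init_clu, A)) (hd ks)"

(* alternating path (3,1)_k of length k, first (rightmost) mutation in direction 1 *)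
definition alt31 :: "nat \<Rightarrow> nat list" where
  "alt31 k = map (\<lambda>j. if even j then 1 else 3) (rev [0..<k])"

definition posp :: "(nat \<Rightarrow> real) \<Rightarrow> bool" where
  "posp p \<longleftrightarrow> p 1 > 0 \<and> p 2 > 0 \<and> p 3 > 0"

(* z = N / (x1^d1 x2^d2 x3^d3) with N a polynomial (coefficients c on exponent triples)
   not divisible by any x_i *)
definition is_dvec :: "ratfun \<Rightarrow> int \<times> int \<times> int \<Rightarrow> bool" where
  "is_dvec z d \<longleftrightarrow> (\<exists>c :: nat \<times> nat \<times> nat \<Rightarrow> real.
      finite {m. c m \<noteq> 0}
    \<and> (\<exists>m. c m \<noteq> 0 \<and> fst m = 0)
    \<and> (\<exists>m. c m \<noteq> 0 \<and> fst (snd m) = 0)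
    \<and> (\<exists>m. c m \<noteq> 0 \<and> snd (snd m) = 0)
    \<and> (\<forall>p. posp p \<longrightarrow>
          z p = (\<Sum>m\<in>{m. c m \<noteq> 0}. c m * p 1 ^ fst m * p 2 ^ fst (snd m) * p 3 ^ snd (snd m))
                / (p 1 powi fst d * p 2 powi fst (snd d) * p 3 powi snd (snd d))))"

definition dvec :: "ratfun \<Rightarrow> int \<times> int \<times> int" where
  "dvec z = (THE d. is_dvec z d)"

definition dless :: "int \<times> int \<times> int \<Rightarrow> int \<times> int \<times> int \<Rightarrow> bool" where
  "dless u v \<longleftrightarrow> fst u \<le> fst v \<and> fst (snd u) \<le> fst (snd v) \<and> snd (snd u) \<le> snd (snd v) \<and> u \<noteq> v"

definition Amat :: "int \<Rightarrow> exmat" where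
  "Amat a = (\<lambda>i j.
     if (i,j) = (1,2) then a else if (i,j) = (1,3) then -2 else
     if (i,j) = (2,1) then -a else if (i,j) = (2,3) then a else
     if (i,j) = (3,1) then 2 else if (i,j) = (3,2) then -a else 0)"

end

(*
  Along the alternating path the exchange matrix only changes sign, so the newly created cluster
  variables form the sequence x(0) = x1, x(1) = x3, x(n+2) x(n) = x(n+1)^2 + x2^a, and
  var_A[(3,1)_k] = x(k+1).  The exchange relation forces the linear recurrence
  x(n+2) + x(n) = L x(n+1) with L = (x1^2 + x3^2 + x2^a) / (x1 x3), from which
  x1^k x3^(k-1) x(k+1) is a polynomial containing the monomials x3^(2k) and x2^(ak) with
  coefficient 1.  Hence d(x(k+1)) = (k, 0, k-1), which increases strictly with k.  That the
  denominator vector is well defined rests on the fact that a polynomial vanishing on the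
  positive orthant has only zero coefficients.
*)
theory Submission
  imports Defs "HOL-Computational_Algebra.Polynomial" "HOL-Library.Product_Order"
begin

section \<open>Polynomial functions on the positive orthant\<close>

definition lin_indep_on :: "'q set \<Rightarrow> ('b \<Rightarrow> 'q \<Rightarrow> real) \<Rightarrow> bool" where
  "lin_indep_on Q f \<longleftrightarrow>
     (\<forall>T d. finite T \<longrightarrow> (\<forall>q\<in>Q. (\<Sum>b\<in>T. d b * f b q) = 0) \<longrightarrow> (\<forall>b\<in>T. d b = 0))"

lemma lin_indep_onI:
  assumes "\<And>T d b. finite T \<Longrightarrow> (\<And>q. q \<in> Q \<Longrightarrow> (\<Sum>b\<in>T. d b * f b q) = 0) \<Longrightarrow> b \<in> T \<Longrightarrow> d b = 0"
  shows "lin_indep_on Q f"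
  using assms unfolding lin_indep_on_def by blast

lemma lin_indep_onD:
  assumes "lin_indep_on Q f" "finite T" "\<And>q. q \<in> Q \<Longrightarrow> (\<Sum>b\<in>T. d b * f b q) = 0" "b \<in> T"
  shows "d b = 0"
  using assms unfolding lin_indep_on_def by blast

lemma lin_indep_on_powers: "lin_indep_on {0<..} (\<lambda>j (t::real). t ^ j)"
proof (rule lin_indep_onI)
  fix T and d :: "nat \<Rightarrow> real" and j
  assume fin: "finite T" and zero: "\<And>t. t \<in> {0<..} \<Longrightarrow> (\<Sum>j\<in>T. d j * t ^ j) = 0" and "j \<in> T"
  define P where "P = (\<Sum>j\<in>T. monom (d j) j)"
  have "P = 0"
  proof (rule ccontr)
    assume "P \<noteq> 0"
    then have "finite {t. poly P t = 0}" by (rule poly_roots_finite)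
    moreover have "{0<..} \<subseteq> {t. poly P t = 0}"
      using zero unfolding P_def poly_sum by (auto simp: poly_monom)
    ultimately show False using infinite_Ioi finite_subset by blast
  qed
  moreover have "coeff P j = d j"
    unfolding P_def coeff_sum using fin \<open>j \<in> T\<close> by (simp add: if_distrib cong: if_cong)
  ultimately show "d j = 0" by simp
qed

lemma lin_indep_on_times_powers:
  assumes indep: "lin_indep_on Q f"
  shows "lin_indep_on ({0<..} \<times> Q) (\<lambda>(j, b) (t, q). t ^ j * f b q)"
proof (rule lin_indep_onI)
  fix S and c :: "nat \<times> 'b \<Rightarrow> real" and m
  assume fin: "finite S" and m: "m \<in> S"
    and zero: "\<And>x. x \<in> {0<..} \<times> Q \<Longrightarrow> (\<Sum>m\<in>S. c m * (case m of (j, b) \<Rightarrow> \<lambda>(t, q). t ^ j * f b q) x) = 0"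
  obtain j b where jb: "m = (j, b)" by (cases m)
  define fibre where "fibre i = {b. (i, b) \<in> S}" for i
  have fibre_eq: "{m\<in>S. fst m = i} = Pair i ` fibre i" for i unfolding fibre_def by force
  have "fibre i \<subseteq> snd ` S" for i unfolding fibre_def by force
  then have fin_fibre: "finite (fibre i)" for i using fin finite_subset by blast
  text \<open>For fixed q, the hypothesis is a polynomial identity in t; compare coefficients.\<close>
  have fibre_sum: "(\<Sum>b\<in>fibre i. c (i, b) * f b q) = 0" if q: "q \<in> Q" and i: "i \<in> fst ` S" for q i
  proof -
    have "(\<Sum>i\<in>fst ` S. (\<Sum>b\<in>fibre i. c (i, b) * f b q) * t ^ i) = 0" if "t \<in> {0<..}" for t
    proof -
      have "(\<Sum>i\<in>fst ` S. (\<Sum>b\<in>fibre i. c (i, b) * f b q) * t ^ i)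
          = (\<Sum>i\<in>fst ` S. \<Sum>m\<in>{m\<in>S. fst m = i}. c m * (t ^ fst m * f (snd m) q))"
        unfolding fibre_eq
        by (intro sum.cong refl, subst sum.reindex) (auto simp: inj_on_def sum_distrib_right intro!: sum.cong)
      also have "\<dots> = (\<Sum>m\<in>S. c m * (t ^ fst m * f (snd m) q))"
        by (rule sum.image_gen[OF fin, symmetric])
      also have "\<dots> = 0" using zero[of "(t, q)"] that q by (simp add: case_prod_beta)
      finally show ?thesis .
    qed
    from lin_indep_onD[OF lin_indep_on_powers finite_imageI[OF fin] this i] show ?thesis .
  qed
  have "j \<in> fst ` S" "b \<in> fibre j" using m jb unfolding fibre_def by force+
  from lin_indep_onD[OF indep fin_fibre fibre_sum[OF _ this(1)] this(2)]
  show "c m = 0" using jb by simp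
qed

lemma lin_indep_on_monomials:
  "lin_indep_on ({0<..} \<times> {0<..} \<times> {0<..})
     (\<lambda>(i, j, l) (x, y, z). x ^ i * (y ^ j * z ^ l) :: real)"
proof -
  have "lin_indep_on ({0<..} \<times> {0<..}) (\<lambda>(j, l) (y, z). y ^ j * z ^ l :: real)"
    using lin_indep_on_times_powers[OF lin_indep_on_powers] by simp
  from lin_indep_on_times_powers[OF this] show ?thesis
    by (simp add: case_prod_beta')
qed

definition mon :: "nat \<times> nat \<times> nat \<Rightarrow> (nat \<Rightarrow> real) \<Rightarrow> real" where
  "mon m p = p 1 ^ fst m * p 2 ^ fst (snd m) * p 3 ^ snd (snd m)"

definition peval :: "(nat \<times> nat \<times> nat \<Rightarrow> real) \<Rightarrow> (nat \<Rightarrow> real) \<Rightarrow> real" where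
  "peval c p = (\<Sum>m\<in>{m. c m \<noteq> 0}. c m * p 1 ^ fst m * p 2 ^ fst (snd m) * p 3 ^ snd (snd m))"

lemma peval_eq_sum:
  assumes "finite T" "{m. c m \<noteq> 0} \<subseteq> T"
  shows "peval c p = (\<Sum>m\<in>T. c m * mon m p)"
  unfolding peval_def mon_def mult.assoc using assms by (intro sum.mono_neutral_left) auto

lemma mon_add: "mon (m + s) p = mon m p * mon s p"
  unfolding mon_def by (simp add: power_add)

lemma peval_eq_0_imp_eq_0:
  assumes fin: "finite {m. c m \<noteq> 0}" and zero: "\<And>p. posp p \<Longrightarrow> peval c p = 0"
  shows "c m = 0"
proof (rule ccontr)
  assume "c m \<noteq> 0"
  have "(\<Sum>m\<in>{m. c m \<noteq> 0}. c m * (case m of (i, j, l) \<Rightarrow> \<lambda>(x, y, z). x ^ i * (y ^ j * z ^ l)) q) = 0"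
    if "q \<in> {0<..} \<times> {0<..} \<times> {0<..}" for q
  proof -
    obtain x y z where q: "q = (x, y, z)" by (cases q)
    define p where "p i = (if i = 1 then x else if i = 2 then y else z)" for i :: nat
    have "posp p" using that unfolding q posp_def p_def by simp
    with zero[of p] show ?thesis unfolding peval_def p_def q by (simp add: case_prod_beta mult.assoc)
  qed
  then have "c m = 0"
    using \<open>c m \<noteq> 0\<close> by (intro lin_indep_onD[OF lin_indep_on_monomials fin, where d = c]) simp_all
  with \<open>c m \<noteq> 0\<close> show False ..
qed

lemma finite_nonzero_add:
  "finite {m. c m \<noteq> 0} \<Longrightarrow> finite {m. d m \<noteq> 0} \<Longrightarrow> finite {m. c m + d m \<noteq> (0::'a::monoid_add)}"
  by (rule finite_subset[of _ "{m. c m \<noteq> 0} \<union> {m. d m \<noteq> 0}"]) auto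

lemma finite_nonzero_diff:
  "finite {m. c m \<noteq> 0} \<Longrightarrow> finite {m. d m \<noteq> 0} \<Longrightarrow> finite {m. c m - d m \<noteq> (0::'a::group_add)}"
  by (rule finite_subset[of _ "{m. c m \<noteq> 0} \<union> {m. d m \<noteq> 0}"]) auto

lemma peval_add:
  assumes "finite {m. c m \<noteq> 0}" "finite {m. d m \<noteq> 0}"
  shows "peval (\<lambda>m. c m + d m) p = peval c p + peval d p"
  using assms
  by (simp add: peval_eq_sum[where T = "{m. c m \<noteq> 0} \<union> {m. d m \<noteq> 0}"] subset_iff
      distrib_right sum.distrib)

lemma peval_diff:
  assumes "finite {m. c m \<noteq> 0}" "finite {m. d m \<noteq> 0}"
  shows "peval (\<lambda>m. c m - d m) p = peval c p - peval d p"
  using assms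
  by (simp add: peval_eq_sum[where T = "{m. c m \<noteq> 0} \<union> {m. d m \<noteq> 0}"] subset_iff
      left_diff_distrib sum_subtractf)

lemma peval_eq_imp_eq:
  assumes "finite {m. c m \<noteq> 0}" "finite {m. d m \<noteq> 0}"
    and "\<And>p. posp p \<Longrightarrow> peval c p = peval d p"
  shows "c = d"
proof
  fix m
  have "c m - d m = 0"
  proof (rule peval_eq_0_imp_eq_0[where c = "\<lambda>m. c m - d m"])
    show "finite {m. c m - d m \<noteq> 0}" using assms(1,2) by (rule finite_nonzero_diff)
    show "peval (\<lambda>m. c m - d m) p = 0" if "posp p" for p
      using assms that by (simp add: peval_diff)
  qed
  then show "c m = d m" by simp
qed

definition shift_coeffs ::
    "nat \<times> nat \<times> nat \<Rightarrow> (nat \<times> nat \<times> nat \<Rightarrow> real) \<Rightarrow> nat \<times> nat \<times> nat \<Rightarrow> real" where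
  "shift_coeffs s c u = (if s \<le> u then c (u - s) else 0)"

lemma le_add_triple: "s \<le> m + (s :: nat \<times> nat \<times> nat)"
  by (cases m; cases s) simp

lemma shift_coeffs_add [simp]: "shift_coeffs s c (m + s) = c m"
  by (cases m; cases s) (simp add: shift_coeffs_def)

lemma nonzero_shift_coeffs: "{u. shift_coeffs s c u \<noteq> 0} = (\<lambda>m. m + s) ` {m. c m \<noteq> 0}"
proof (intro equalityI subsetI)
  fix u assume "u \<in> {u. shift_coeffs s c u \<noteq> 0}"
  then have "s \<le> u" "c (u - s) \<noteq> 0" by (auto simp: shift_coeffs_def split: if_splits)
  moreover from \<open>s \<le> u\<close> have "u = (u - s) + s" by (cases u; cases s) simp
  ultimately show "u \<in> (\<lambda>m. m + s) ` {m. c m \<noteq> 0}" by blast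
qed auto

lemma finite_nonzero_shift_coeffs:
  "finite {m. c m \<noteq> 0} \<Longrightarrow> finite {u. shift_coeffs s c u \<noteq> 0}"
  by (simp add: nonzero_shift_coeffs)

lemma peval_shift_coeffs:
  assumes fin: "finite {m. c m \<noteq> 0}"
  shows "peval (shift_coeffs s c) p = mon s p * peval c p"
proof -
  have "peval (shift_coeffs s c) p = (\<Sum>m\<in>{m. c m \<noteq> 0}. c m * mon (m + s) p)"
    using fin by (simp add: peval_eq_sum[where T = "{u. shift_coeffs s c u \<noteq> 0}"]
        nonzero_shift_coeffs sum.reindex inj_on_def)
  also have "\<dots> = mon s p * peval c p"
    using fin by (simp add: peval_eq_sum[OF fin] mon_add sum_distrib_left mult_ac)
  finally show ?thesis .
qed

definition indivisible :: "(nat \<times> nat \<times> nat \<Rightarrow> real) \<Rightarrow> bool" where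
  "indivisible c \<longleftrightarrow> (\<exists>m. c m \<noteq> 0 \<and> fst m = 0) \<and> (\<exists>m. c m \<noteq> 0 \<and> fst (snd m) = 0)
     \<and> (\<exists>m. c m \<noteq> 0 \<and> snd (snd m) = 0)"

lemma shift_coeffs_eq_imp_le:
  assumes eq: "shift_coeffs s' c = shift_coeffs s d" and "indivisible d"
  shows "s' \<le> s"
proof -
  have le: "s' \<le> m + s" if "d m \<noteq> 0" for m
    using fun_cong[OF eq, of "m + s"] that le_add_triple by (auto simp: shift_coeffs_def split: if_splits)
  from \<open>indivisible d\<close> obtain m1 m2 m3 where
    "d m1 \<noteq> 0" "fst m1 = 0" "d m2 \<noteq> 0" "fst (snd m2) = 0" "d m3 \<noteq> 0" "snd (snd m3) = 0"
    unfolding indivisible_def by blast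
  with le[of m1] le[of m2] le[of m3] show ?thesis by (auto simp: less_eq_prod_def)
qed

section \<open>Denominator vectors\<close>

definition lmon :: "int \<times> int \<times> int \<Rightarrow> (nat \<Rightarrow> real) \<Rightarrow> real" where
  "lmon d p = p 1 powi fst d * p 2 powi fst (snd d) * p 3 powi snd (snd d)"

definition nat_part :: "int \<times> int \<times> int \<Rightarrow> nat \<times> nat \<times> nat" where
  "nat_part d = (nat (fst d), nat (fst (snd d)), nat (snd (snd d)))"

lemma nat_part_add_neg_cancel:
  assumes "nat_part d + nat_part (- d') = nat_part d' + nat_part (- d)"
  shows "d = d'"
proof -
  have int_cancel: "nat x + nat (- y) = nat y + nat (- x) \<Longrightarrow> x = y" for x y :: int
    by arith
  from assms show ?thesis
    by (cases d; cases d') (simp add: nat_part_def int_cancel)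
qed

lemma power_int_mult_power_nat_neg:
  fixes x :: real
  assumes "x \<noteq> 0"
  shows "x powi e * x ^ nat (- e) = x ^ nat e"
  using assms by (simp add: power_int_def power_inverse)

lemma lmon_mult_mon:
  assumes "posp p"
  shows "lmon d p * mon (nat_part (- d)) p = mon (nat_part d) p"
proof -
  have "lmon d p * mon (nat_part (- d)) p
      = (p 1 powi fst d * p 1 ^ nat (- fst d)) * (p 2 powi fst (snd d) * p 2 ^ nat (- fst (snd d)))
        * (p 3 powi snd (snd d) * p 3 ^ nat (- snd (snd d)))"
    unfolding lmon_def mon_def nat_part_def by (simp add: mult_ac)
  also have "\<dots> = mon (nat_part d) p"
    using assms unfolding posp_def mon_def nat_part_def by (simp add: power_int_mult_power_nat_neg)
  finally show ?thesis .
qed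

lemma lmon_nonzero: "posp p \<Longrightarrow> lmon d p \<noteq> 0"
  unfolding posp_def lmon_def by simp

lemma is_dvec_iff:
  "is_dvec z d \<longleftrightarrow> (\<exists>c. finite {m. c m \<noteq> 0} \<and> indivisible c
     \<and> (\<forall>p. posp p \<longrightarrow> z p = peval c p / lmon d p))"
  unfolding is_dvec_def indivisible_def peval_def lmon_def by blast

lemma is_dvec_unique:
  assumes "is_dvec z d" and "is_dvec z d'"
  shows "d = d'"
proof -
  obtain c where c: "finite {m. c m \<noteq> 0}" "indivisible c" "\<And>p. posp p \<Longrightarrow> z p = peval c p / lmon d p"
    using assms(1) unfolding is_dvec_iff by blast
  obtain c' where c': "finite {m. c' m \<noteq> 0}" "indivisible c'" "\<And>p. posp p \<Longrightarrow> z p = peval c' p / lmon d' p"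
    using assms(2) unfolding is_dvec_iff by blast
  text \<open>Clearing denominators turns the two representations into x^s' N = x^s N'; since no
    variable divides N or N', the monomial factors must agree.\<close>
  define s where "s = nat_part d + nat_part (- d')"
  define s' where "s' = nat_part d' + nat_part (- d)"
  have "peval (shift_coeffs s' c) p = peval (shift_coeffs s c') p" if p: "posp p" for p
  proof -
    have E: "peval c p * lmon d' p = peval c' p * lmon d p"
      using c(3)[OF p] c'(3)[OF p] lmon_nonzero[OF p] by (simp add: field_simps)
    have "mon s' p * peval c p
        = (peval c p * lmon d' p) * (mon (nat_part (- d)) p * mon (nat_part (- d')) p)"
      unfolding s'_def mon_add lmon_mult_mon[OF p, of d', symmetric] by (simp add: ac_simps)
    also have "\<dots> = mon s p * peval c' p"
      unfolding E s_def mon_add lmon_mult_mon[OF p, of d, symmetric] by (simp add: ac_simps)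
    finally show ?thesis by (simp add: peval_shift_coeffs c(1) c'(1))
  qed
  then have eq: "shift_coeffs s' c = shift_coeffs s c'"
    by (rule peval_eq_imp_eq[OF finite_nonzero_shift_coeffs[OF c(1)] finite_nonzero_shift_coeffs[OF c'(1)]])
  have "s = s'"
    using shift_coeffs_eq_imp_le[OF eq[symmetric] c(2)] shift_coeffs_eq_imp_le[OF eq c'(2)]
    by (rule order.antisym)
  then show ?thesis
    unfolding s_def s'_def by (rule nat_part_add_neg_cancel)
qed

lemma dvec_eqI: "is_dvec z d \<Longrightarrow> dvec z = d"
  unfolding dvec_def using is_dvec_unique by blast

section \<open>The exchange sequence\<close>

fun exch_seq :: "nat \<Rightarrow> nat \<Rightarrow> ratfun" where
  "exch_seq a 0 = (\<lambda>p. p 1)"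
| "exch_seq a (Suc 0) = (\<lambda>p. p 3)"
| "exch_seq a (Suc (Suc n)) = (\<lambda>p. (exch_seq a (Suc n) p ^ 2 + p 2 ^ a) / exch_seq a n p)"

lemma exch_seq_pos: "posp p \<Longrightarrow> exch_seq a n p > 0"
  by (induction a n rule: exch_seq.induct) (auto simp: posp_def intro!: divide_pos_pos add_pos_pos)

lemma exch_seq_exchange:
  "posp p \<Longrightarrow> exch_seq a (Suc (Suc n)) p * exch_seq a n p = exch_seq a (Suc n) p ^ 2 + p 2 ^ a"
  using exch_seq_pos[of p a n] by simp

text \<open>The exchange relation keeps the ratio (x(n+2) + x(n)) / x(n+1) constant, so the sequence
  also satisfies a linear recurrence.\<close>
lemma exch_seq_linear_rec:
  assumes p: "posp p"
  shows "exch_seq a (Suc (Suc n)) p + exch_seq a n p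
       = (p 1 ^ 2 + p 3 ^ 2 + p 2 ^ a) / (p 1 * p 3) * exch_seq a (Suc n) p"
proof (induction n)
  case 0
  from p show ?case by (simp add: posp_def field_simps power2_eq_square)
next
  case (Suc n)
  let ?L = "(p 1 ^ 2 + p 3 ^ 2 + p 2 ^ a) / (p 1 * p 3)"
  let ?x = "\<lambda>n. exch_seq a n p"
  have pos: "?x (Suc n) > 0" using exch_seq_pos[OF p] .
  have "?x (Suc (Suc (Suc n))) + ?x (Suc n) = (?x (Suc (Suc n)) ^ 2 + p 2 ^ a + ?x (Suc n) ^ 2) / ?x (Suc n)"
    using pos by (simp add: field_simps power2_eq_square)
  also have "\<dots> = ?x (Suc (Suc n)) * (?x (Suc (Suc n)) + ?x n) / ?x (Suc n)"
    using exch_seq_exchange[OF p, of a n] by (simp add: algebra_simps power2_eq_square)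
  also have "\<dots> = ?x (Suc (Suc n)) * (?L * ?x (Suc n)) / ?x (Suc n)"
    by (simp only: Suc)
  also have "\<dots> = ?L * ?x (Suc (Suc n))"
    using pos by (simp del: exch_seq.simps)
  finally show ?case .
qed

fun numer :: "nat \<Rightarrow> nat \<Rightarrow> nat \<times> nat \<times> nat \<Rightarrow> real" where
  "numer a 0 = (\<lambda>m. if m = (0, 0, 0) then 1 else 0)"
| "numer a (Suc 0) = (\<lambda>m. (if m = (0, 0, 2) then 1 else 0) + (if m = (0, a, 0) then 1 else 0))"
| "numer a (Suc (Suc k)) = (\<lambda>m.
      shift_coeffs (2, 0, 0) (numer a (Suc k)) m + shift_coeffs (0, 0, 2) (numer a (Suc k)) m
    + shift_coeffs (0, a, 0) (numer a (Suc k)) m - shift_coeffs (2, 0, 2) (numer a k) m)"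

lemma finite_nonzero_numer: "finite {m. numer a k m \<noteq> 0}"
proof (induction a k rule: numer.induct)
  case (1 a)
  show ?case by (rule finite_subset[of _ "{(0, 0, 0)}"]) auto
next
  case (2 a)
  show ?case by (rule finite_subset[of _ "{(0, 0, 2), (0, a, 0)}"]) auto
next
  case (3 a k)
  then show ?case
    by (simp only: numer.simps) (intro finite_nonzero_diff finite_nonzero_add finite_nonzero_shift_coeffs)
qed

lemma peval_numer_0: "peval (numer a 0) p = 1"
  by (simp add: peval_eq_sum[where T = "{(0, 0, 0)}"] mon_def)

lemma peval_numer_1: "peval (numer a (Suc 0)) p = p 3 ^ 2 + p 2 ^ a"
  by (subst peval_eq_sum[where T = "{(0, 0, 2), (0, a, 0)}"]) (auto simp: mon_def)

lemma peval_numer_Suc_Suc: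
  "peval (numer a (Suc (Suc k))) p
   = (p 1 ^ 2 + p 3 ^ 2 + p 2 ^ a) * peval (numer a (Suc k)) p - (p 1 * p 3) ^ 2 * peval (numer a k) p"
  by (simp only: numer.simps peval_diff peval_add peval_shift_coeffs finite_nonzero_numer
      finite_nonzero_diff finite_nonzero_add finite_nonzero_shift_coeffs)
    (simp add: mon_def algebra_simps power2_eq_square)

lemma numer_coeff_x3_power: "0 < a \<Longrightarrow> numer a k (0, 0, 2 * k) = 1"
  by (induction a k rule: numer.induct) (auto simp: shift_coeffs_def)

lemma numer_coeff_x2_power: "0 < a \<Longrightarrow> numer a k (0, a * k, 0) = 1"
  by (induction a k rule: numer.induct) (auto simp: shift_coeffs_def algebra_simps)

lemma exch_seq_numer:
  assumes p: "posp p"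
  shows "exch_seq a (Suc k) p * (p 1 * p 3) ^ k = peval (numer a k) p * p 3"
proof (induction a k rule: numer.induct)
  case (1 a)
  show ?case by (simp add: peval_numer_0 del: numer.simps)
next
  case (2 a)
  from p show ?case by (simp add: peval_numer_1 posp_def field_simps del: numer.simps)
next
  case (3 a k)
  let ?x = "\<lambda>n. exch_seq a n p" and ?C = "p 1 ^ 2 + p 3 ^ 2 + p 2 ^ a" and ?q = "p 1 * p 3"
  have rec: "?x (Suc (Suc (Suc k))) = ?C / ?q * ?x (Suc (Suc k)) - ?x (Suc k)"
    using exch_seq_linear_rec[OF p, of a "Suc k"] by (simp only: eq_diff_eq)
  have alg: "(C / q * y - x) * q ^ Suc (Suc k) = C * (y * q ^ Suc k) - q ^ 2 * (x * q ^ k)"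
    if "q \<noteq> 0" for C q y x :: real
    using that by (simp add: field_simps power2_eq_square)
  have "?x (Suc (Suc (Suc k))) * ?q ^ Suc (Suc k)
      = ?C * (?x (Suc (Suc k)) * ?q ^ Suc k) - ?q ^ 2 * (?x (Suc k) * ?q ^ k)"
    unfolding rec using p by (intro alg) (simp add: posp_def)
  also have "\<dots> = ?C * (peval (numer a (Suc k)) p * p 3) - ?q ^ 2 * (peval (numer a k) p * p 3)"
    by (simp only: 3)
  also have "\<dots> = peval (numer a (Suc (Suc k))) p * p 3"
    by (simp add: peval_numer_Suc_Suc algebra_simps del: numer.simps)
  finally show ?case .
qed

lemma exch_seq_is_dvec:
  assumes "0 < a"
  shows "is_dvec (exch_seq a (Suc k)) (int k, 0, int k - 1)"
  unfolding is_dvec_iff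
proof (intro exI conjI allI impI)
  show "finite {m. numer a k m \<noteq> 0}" by (rule finite_nonzero_numer)
  show "indivisible (numer a k)"
    unfolding indivisible_def using numer_coeff_x3_power[OF assms, of k] numer_coeff_x2_power[OF assms, of k]
    by (metis fst_conv snd_conv zero_neq_one)
next
  fix p assume p: "posp p"
  then have "p 1 > 0" "p 3 > 0" by (auto simp: posp_def)
  then show "exch_seq a (Suc k) p = peval (numer a k) p / lmon (int k, 0, int k - 1) p"
    using exch_seq_numer[OF p, of a k]
    by (simp add: lmon_def power_int_diff power_mult_distrib field_simps)
qed


section \<open>Mutations along the alternating path\<close>

lemma mut_mat_1_Amat: "0 < a \<Longrightarrow> mut_mat 1 (Amat a) = (\<lambda>i j. - Amat a i j)"
  by (auto simp: mut_mat_def Amat_def fun_eq_iff sgn_if max_def)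

lemma mut_mat_3_neg_Amat: "0 < a \<Longrightarrow> mut_mat 3 (\<lambda>i j. - Amat a i j) = Amat a"
  by (auto simp: mut_mat_def Amat_def fun_eq_iff sgn_if max_def)

lemma mut_clu_1_Amat:
  assumes "0 < a"
  shows "mut_clu 1 (Amat a) x = x(1 := (\<lambda>p. (x 3 p ^ 2 + x 2 p ^ nat a) / x 1 p))"
proof -
  have "{i\<in>{1,2,3}. Amat a i 1 > 0} = {3}" "{i\<in>{1,2,3}. Amat a i 1 < 0} = {2}"
    using assms by (auto simp: Amat_def)
  then show ?thesis unfolding mut_clu_def by (simp add: Amat_def)
qed

lemma mut_clu_3_neg_Amat:
  assumes "0 < a"
  shows "mut_clu 3 (\<lambda>i j. - Amat a i j) x = x(3 := (\<lambda>p. (x 1 p ^ 2 + x 2 p ^ nat a) / x 3 p))"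
proof -
  have "{i\<in>{1,2,3}. - Amat a i 3 > 0} = {1}" "{i\<in>{1,2,3}. - Amat a i 3 < 0} = {2}"
    using assms by (auto simp: Amat_def)
  then show ?thesis unfolding mut_clu_def by (simp add: Amat_def)
qed

definition alt_cluster :: "nat \<Rightarrow> nat \<Rightarrow> cluster" where
  "alt_cluster a k = init_clu(1 := exch_seq a (if even k then k else Suc k),
                              3 := exch_seq a (if even k then Suc k else k))"

lemma alt31_Suc: "alt31 (Suc k) = (if even k then 1 else 3) # alt31 k"
  unfolding alt31_def by simp

lemma path_seed_Cons: "path_seed (k # ks) s = mut_seed k (path_seed ks s)"
  unfolding path_seed_def by simp

lemma path_seed_alt31:
  assumes "0 < a"
  shows "path_seed (alt31 k) (init_clu, Amat a)
       = (alt_cluster (nat a) k, if even k then Amat a else (\<lambda>i j. - Amat a i j))"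
proof (induction k)
  case 0
  have "alt_cluster (nat a) 0 = init_clu" unfolding alt_cluster_def init_clu_def by auto
  then show ?case by (simp add: alt31_def path_seed_def)
next
  case (Suc k)
  show ?case
  proof (cases "even k")
    case True
    then have "mut_clu 1 (Amat a) (alt_cluster (nat a) k) = alt_cluster (nat a) (Suc k)"
      unfolding mut_clu_1_Amat[OF assms] by (auto simp: alt_cluster_def fun_eq_iff init_clu_def)
    with True show ?thesis
      by (simp add: alt31_Suc path_seed_Cons Suc mut_seed_def mut_mat_1_Amat[OF assms, simplified])
  next
    case False
    then have "mut_clu 3 (\<lambda>i j. - Amat a i j) (alt_cluster (nat a) k) = alt_cluster (nat a) (Suc k)"
      unfolding mut_clu_3_neg_Amat[OF assms] by (auto simp: alt_cluster_def fun_eq_iff init_clu_def)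
    with False show ?thesis
      by (simp add: alt31_Suc path_seed_Cons Suc mut_seed_def mut_mat_3_neg_Amat[OF assms])
  qed
qed

lemma var_alt31: "0 < a \<Longrightarrow> var (Amat a) (alt31 (Suc k)) = exch_seq (nat a) (Suc (Suc k))"
  unfolding var_def path_seed_alt31[of a "Suc k"] by (simp add: alt31_Suc alt_cluster_def)

lemma dvec_var_alt31: "0 < a \<Longrightarrow> dvec (var (Amat a) (alt31 (Suc k))) = (int (Suc k), 0, int k)"
  using dvec_eqI[OF exch_seq_is_dvec[of "nat a" "Suc k"]] by (simp add: var_alt31)

theorem mainTheorem17:
  fixes a :: int and k :: nat
  assumes "a \<ge> 3" and "k \<ge> 1"
  shows "dless (dvec (var (Amat a) (alt31 k))) (dvec (var (Amat a) (alt31 (Suc k))))"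
proof -
  obtain j where "k = Suc j" using \<open>k \<ge> 1\<close> by (cases k) auto
  with \<open>a \<ge> 3\<close> show ?thesis by (simp add: dvec_var_alt31 dless_def)
qed

end
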